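(* Let $\{x^k\}$ be an infinite sequence generated by the MPG algorithm described in the context (i.e., the algorithm never stops), and suppose Assumption (A1) holds. Then $\{x^k\}$ converges to a weakly Pareto optimal point $\bar x$ of the problem $\min_{x\in\mathbb{R}^n}F(x)$.
   Context: Let $F:\mathbb{R}^n\to(\mathbb{R}\cup\{+\infty\})^m$, $F=(F_1,\ldots,F_m)$, with $F_j=G_j+H_j$ for $j=1,\ldots,m$, where: (i) each $G_j:\mathbb{R}^n\to\mathbb{R}$ is continuously differentiable and convex; (ii) each $H_j:\mathbb{R}^n\to\mathbb{R}\cup\{+\infty\}$ is proper, convex and continuous on its domain; (iii) $\mathrm{dom}(F):=\{x: F_j(x)<+\infty\ \forall j\}$ is nonempty and closed. For $u,v\in\mathbb{R}^m$, $u\preceq v$ means $u_j\le v_j$ for all $j$, and $u\prec v$ means $u_j<v_j$ for all $j$. A point $\bar x$ is weakly Pareto optimal if there is no $x\in\mathbb{R}^n$ with $F(x)\prec F(\bar x)$. Assumption (A1): for every sequence $\{y^k\}\subset\mathrm{dom}(F)$ with $F(y^{k+1})\preceq F(y^k)$ for all $k$, there exists $y\in\mathrm{dom}(F)$ with $F(y)\preceq F(y^k)$ for all $k$. For $x\in\mathrm{dom}(F)$ and $\alpha>0$ define $\psi_x(u):=\max_{j=1,\ldots,m}\big(\nabla G_j(x)^\top(u-x)+H_j(u)-H_j(x)\big)$, $p_\alpha(x):=\arg\min_{u\in\mathbb{R}^n}\psi_x(u)+\frac{1}{2\alpha}\|u-x\|^2$ (unique minimizer), and $\theta_\alpha(x):=\psi_x(p_\alpha(x))+\frac{1}{2\alpha}\|p_\alpha(x)-x\|^2$.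 MPG algorithm. Step 0: choose $x^0\in\mathrm{dom}(F)$, $\alpha>0$, $\gamma\in(0,2/\alpha)$, $0<\tau_1<\tau_2<1$; set $k=0$. Step 1: compute $p^k:=p_\alpha(x^k)$ and $\theta_\alpha(x^k)$. Step 2: if $\theta_\alpha(x^k)=0$, stop. Step 3: set $d^k:=p^k-x^k$, take $j_k^*\in\arg\max_{j}\nabla G_j(x^k)^\top d^k$, set $t=1$. Step 3.1: if $G_{j_k^*}(x^k+td^k)\le G_{j_k^*}(x^k)+t\nabla G_{j_k^*}(x^k)^\top d^k+t\frac{\gamma}{2}\|d^k\|^2$, go to Step 3.2; otherwise replace $t$ by some value in $[\tau_1 t,\tau_2 t]$ and repeat Step 3.1. Step 3.2: if $F(x^k+td^k)\preceq F(x^k)$, set $t_k=t$ and go to Step 4. Step 3.3: replace $t$ by some value in $[\tau_1 t,\tau_2 t]$; if $G_j(x^k+td^k)\le G_j(x^k)+t\nabla G_j(x^k)^\top d^k+t\frac{\gamma}{2}\|d^k\|^2$ for all $j=1,\ldots,m$, set $t_k=t$ and go to Step 4; otherwise repeat Step 3.3. Step 4: $x^{k+1}:=x^k+t_kd^k$, $k\leftarrow k+1$, go to Step 1. *)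

theory Defs
  imports "HOL-Analysis.Analysis" "HOL-Library.Extended_Real"
begin

text \<open>Objectives are indexed by j in {..<m}. G j is real valued, H j is extended-real valued
(value \<infinity> allowed). DG j x is the gradient of G j at x.\<close>

definition Fv :: "(nat \<Rightarrow> 'a \<Rightarrow> real) \<Rightarrow> (nat \<Rightarrow> 'a \<Rightarrow> ereal) \<Rightarrow> nat \<Rightarrow> 'a \<Rightarrow> ereal" where
  "Fv G H j x = ereal (G j x) + H j x"

definition domF :: "nat \<Rightarrow> (nat \<Rightarrow> 'a \<Rightarrow> ereal) \<Rightarrow> 'a set" where
  "domF m H = {x. \<forall>j<m. H j x < \<infinity>}"

definition ereal_convex :: "('a::real_vector \<Rightarrow> ereal) \<Rightarrow> bool" where
  "ereal_convex f \<longleftrightarrow> (\<forall>x y t. 0 < t \<and> t < 1 \<longrightarrow>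
      f ((1 - t) *\<^sub>R x + t *\<^sub>R y) \<le> ereal (1 - t) * f x + ereal t * f y)"

definition proper_fun :: "('a \<Rightarrow> ereal) \<Rightarrow> bool" where
  "proper_fun f \<longleftrightarrow> (\<forall>x. f x \<noteq> -\<infinity>) \<and> (\<exists>x. f x \<noteq> \<infinity>)"

definition Fle :: "nat \<Rightarrow> (nat \<Rightarrow> 'a \<Rightarrow> real) \<Rightarrow> (nat \<Rightarrow> 'a \<Rightarrow> ereal) \<Rightarrow> 'a \<Rightarrow> 'a \<Rightarrow> bool" where
  "Fle m G H y x \<longleftrightarrow> (\<forall>j<m. Fv G H j y \<le> Fv G H j x)"

definition weakly_pareto :: "nat \<Rightarrow> (nat \<Rightarrow> 'a \<Rightarrow> real) \<Rightarrow> (nat \<Rightarrow> 'a \<Rightarrow> ereal) \<Rightarrow> 'a \<Rightarrow> bool" where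
  "weakly_pareto m G H xb \<longleftrightarrow> \<not> (\<exists>x. \<forall>j<m. Fv G H j x < Fv G H j xb)"

definition assumption_A1 :: "nat \<Rightarrow> (nat \<Rightarrow> 'a \<Rightarrow> real) \<Rightarrow> (nat \<Rightarrow> 'a \<Rightarrow> ereal) \<Rightarrow> bool" where
  "assumption_A1 m G H \<longleftrightarrow> (\<forall>y :: nat \<Rightarrow> 'a.
      (\<forall>k. y k \<in> domF m H) \<and> (\<forall>k. Fle m G H (y (Suc k)) (y k)) \<longrightarrow>
      (\<exists>z\<in>domF m H. \<forall>k. Fle m G H z (y k)))"

definition psi :: "nat \<Rightarrow> (nat \<Rightarrow> 'a::real_inner \<Rightarrow> 'a) \<Rightarrow> (nat \<Rightarrow> 'a \<Rightarrow> ereal) \<Rightarrow> 'a \<Rightarrow> 'a \<Rightarrow> ereal" where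
  "psi m DG H x u = Max ((\<lambda>j. ereal (DG j x \<bullet> (u - x)) + H j u - H j x) ` {..<m})"

definition phi :: "nat \<Rightarrow> (nat \<Rightarrow> 'a::real_inner \<Rightarrow> 'a) \<Rightarrow> (nat \<Rightarrow> 'a \<Rightarrow> ereal) \<Rightarrow> real \<Rightarrow> 'a \<Rightarrow> 'a \<Rightarrow> ereal" where
  "phi m DG H \<alpha> x u = psi m DG H x u + ereal ((norm (u - x))\<^sup>2 / (2 * \<alpha>))"

definition armijo :: "(nat \<Rightarrow> 'a::real_inner \<Rightarrow> real) \<Rightarrow> (nat \<Rightarrow> 'a \<Rightarrow> 'a) \<Rightarrow> real \<Rightarrow> 'a \<Rightarrow> 'a \<Rightarrow> nat \<Rightarrow> real \<Rightarrow> bool" where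
  "armijo G DG \<gamma> x d j t \<longleftrightarrow>
     G j (x + t *\<^sub>R d) \<le> G j x + t * (DG j x \<bullet> d) + t * (\<gamma> / 2) * (norm d)\<^sup>2"

text \<open>One (non-terminating) iteration of MPG from x to x'. p is p_alpha(x) (the minimizer of phi),
  theta_alpha(x) = phi x p must be nonzero (the algorithm does not stop), ts is the sequence of
  trial step sizes (ts 0 = 1, each next one chosen in [tau1 t, tau2 t]); N1 is the index where
  Step 3.1 terminates, and in the case of Step 3.3 N2 is the index where it terminates.\<close>
definition mpg_step :: "nat \<Rightarrow> (nat \<Rightarrow> 'a::real_inner \<Rightarrow> real) \<Rightarrow> (nat \<Rightarrow> 'a \<Rightarrow> 'a) \<Rightarrow> (nat \<Rightarrow> 'a \<Rightarrow> ereal)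
    \<Rightarrow> real \<Rightarrow> real \<Rightarrow> real \<Rightarrow> real \<Rightarrow> 'a \<Rightarrow> 'a \<Rightarrow> bool" where
  "mpg_step m G DG H \<alpha> \<gamma> \<tau>1 \<tau>2 x x' \<longleftrightarrow>
    (\<exists>p js ts N1 tk.
       is_arg_min (phi m DG H \<alpha> x) (\<lambda>_. True) p \<and>
       phi m DG H \<alpha> x p \<noteq> 0 \<and>
       js < m \<and> (\<forall>i<m. DG i x \<bullet> (p - x) \<le> DG js x \<bullet> (p - x)) \<and>
       ts 0 = 1 \<and> (\<forall>i. \<tau>1 * ts i \<le> ts (Suc i) \<and> ts (Suc i) \<le> \<tau>2 * ts i) \<and>
       armijo G DG \<gamma> x (p - x) js (ts N1) \<and>
       (\<forall>i<N1. \<not> armijo G DG \<gamma> x (p - x) js (ts i)) \<and>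
       ((Fle m G H (x + ts N1 *\<^sub>R (p - x)) x \<and> tk = ts N1) \<or>
        (\<not> Fle m G H (x + ts N1 *\<^sub>R (p - x)) x \<and>
         (\<exists>N2>N1. (\<forall>j<m. armijo G DG \<gamma> x (p - x) j (ts N2)) \<and>
            (\<forall>i. N1 < i \<and> i < N2 \<longrightarrow> \<not> (\<forall>j<m. armijo G DG \<gamma> x (p - x) j (ts i))) \<and>
            tk = ts N2))) \<and>
       x' = x + tk *\<^sub>R (p - x))"

definition mpg_sequence :: "nat \<Rightarrow> (nat \<Rightarrow> 'a::real_inner \<Rightarrow> real) \<Rightarrow> (nat \<Rightarrow> 'a \<Rightarrow> 'a) \<Rightarrow> (nat \<Rightarrow> 'a \<Rightarrow> ereal)
    \<Rightarrow> real \<Rightarrow> real \<Rightarrow> real \<Rightarrow> real \<Rightarrow> (nat \<Rightarrow> 'a) \<Rightarrow> bool" where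
  "mpg_sequence m G DG H \<alpha> \<gamma> \<tau>1 \<tau>2 xs \<longleftrightarrow>
     xs 0 \<in> domF m H \<and> 0 < \<alpha> \<and> 0 < \<gamma> \<and> \<gamma> < 2 / \<alpha> \<and> 0 < \<tau>1 \<and> \<tau>1 < \<tau>2 \<and> \<tau>2 < 1 \<and>
     (\<forall>k. mpg_step m G DG H \<alpha> \<gamma> \<tau>1 \<tau>2 (xs k) (xs (Suc k)))"

end

(*
  Every MPG step decreases all objectives, and one of them by at least
  (1 - alpha gamma / 2) t_k (-psi_{x^k}(p^k)).  With the common lower bound supplied by (A1),
  summing the objectives shows that sum_k t_k (-psi_{x^k}(p^k)) is finite.  The optimality
  condition of the proximal subproblem then makes (x^k) quasi-Fejer monotone with respect to
  every point whose objective values lie below all F(x^k).  Hence (x^k) is bounded; a cluster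
  point of it lies in the closed domain and below all F(x^k), and quasi-Fejer monotonicity with
  respect to this point gives convergence of the whole sequence to it.  Finally, the backtracking
  rule and the continuity of the gradients prevent the directions p^k - x^k from staying away
  from 0; along a subsequence where they vanish, the proximal optimality condition passes to the
  limit and shows that the limit is weakly Pareto optimal.
*)

theory Submission
  imports Defs
begin

lemma convex_gradient_inequality:
  fixes f :: "'a::real_inner \<Rightarrow> real"
  assumes deriv: "(f has_derivative (\<lambda>h. D \<bullet> h)) (at x)" and conv: "convex_on UNIV f"
  shows "f x + D \<bullet> (y - x) \<le> f y"
proof -
  define g where "g t = f (x + t *\<^sub>R (y - x))" for t :: real
  have "convex_on UNIV g"
  proof (rule convex_onI)
    fix t a b :: real
    assume "0 < t" "t < 1"
    have "x + ((1 - t) * a + t * b) *\<^sub>R (y - x)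
        = (1 - t) *\<^sub>R (x + a *\<^sub>R (y - x)) + t *\<^sub>R (x + b *\<^sub>R (y - x))"
      by (simp add: algebra_simps)
    thus "g ((1 - t) *\<^sub>R a + t *\<^sub>R b) \<le> (1 - t) * g a + t * g b"
      unfolding g_def using convex_onD[OF conv, of t] \<open>0 < t\<close> \<open>t < 1\<close> by simp
  qed simp
  moreover have "(g has_field_derivative D \<bullet> (y - x)) (at 0)"
  proof -
    have "((\<lambda>t. x + t *\<^sub>R (y - x)) has_derivative (\<lambda>t. t *\<^sub>R (y - x))) (at 0)"
      by (auto intro!: derivative_eq_intros)
    moreover have "(f has_derivative (\<lambda>h. D \<bullet> h)) (at ((\<lambda>t. x + t *\<^sub>R (y - x)) 0))"
      using deriv by simp
    ultimately have "(g has_derivative (\<lambda>t. D \<bullet> (t *\<^sub>R (y - x)))) (at 0)"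
      unfolding g_def by (rule has_derivative_compose)
    thus ?thesis
      by (simp add: has_field_derivative_def mult.commute[of _ "D \<bullet> (y - x)"])
  qed
  ultimately have "D \<bullet> (y - x) \<le> g 1 - g 0"
    using convex_on_imp_above_tangent[of UNIV g 0 1 "D \<bullet> (y - x)"] by simp
  thus ?thesis by (simp add: g_def)
qed

lemma nonneg_if_nonneg_plus_small_multiple:
  fixes A B :: real
  assumes "\<And>s. 0 < s \<Longrightarrow> s < 1 \<Longrightarrow> 0 \<le> A + s * B"
  shows "0 \<le> A"
proof -
  have "((\<lambda>s. A + s * B) \<longlongrightarrow> A + 0 * B) (at_right 0)"
    by (intro tendsto_intros)
  moreover have "\<forall>\<^sub>F s in at_right 0. (s::real) \<in> {0<..<1}"
    using eventually_at_right_real[of 0 1] by simp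
  then have "\<forall>\<^sub>F s in at_right 0. 0 \<le> A + s * B"
    by (rule eventually_mono) (use assms in auto)
  ultimately show ?thesis
    by (simp add: tendsto_lowerbound)
qed

lemma step_sizes_in_unit_interval:
  fixes ts :: "nat \<Rightarrow> real"
  assumes "ts 0 = 1" "\<And>i. \<tau>1 * ts i \<le> ts (Suc i) \<and> ts (Suc i) \<le> \<tau>2 * ts i"
    and "0 < \<tau>1" "\<tau>2 < 1"
  shows "0 < ts i \<and> ts i \<le> 1"
proof (induction i)
  case (Suc i)
  have "0 < \<tau>1 * ts i" "\<tau>2 * ts i < 1 * ts i"
    using Suc assms(3,4) by (auto intro: mult_strict_right_mono)
  with Suc assms(2)[of i] show ?case by auto
qed (use assms(1) in simp)

lemma norm_sq_step_toward_le:
  fixes x p z :: "'a::real_inner"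
  assumes q: "(x - p) \<bullet> (z - p) \<le> q" and t: "0 \<le> t" "t \<le> 1"
  shows "(norm (x + t *\<^sub>R (p - x) - z))\<^sup>2 \<le> (norm (x - z))\<^sup>2 + 2 * t * q"
proof -
  define a where "a = x - z"
  define b where "b = p - x"
  have "(x - p) \<bullet> (z - p) = b \<bullet> a + b \<bullet> b"
    by (simp add: a_def b_def algebra_simps inner_diff_left inner_diff_right inner_commute)
  hence "2 * t * (a \<bullet> b + b \<bullet> b) \<le> 2 * t * q"
    using q t by (intro mult_left_mono) (auto simp: inner_commute)
  moreover have "t\<^sup>2 \<le> 2 * t"
    using t mult_left_le_one_le[of t t] by (simp add: power2_eq_square)
  hence "t\<^sup>2 * (b \<bullet> b) \<le> 2 * t * (b \<bullet> b)"
    by (intro mult_right_mono) auto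
  moreover have "(norm (x + t *\<^sub>R (p - x) - z))\<^sup>2 = a \<bullet> a + 2 * t * (a \<bullet> b) + t\<^sup>2 * (b \<bullet> b)"
    unfolding power2_norm_eq_inner a_def b_def
    by (simp add: algebra_simps inner_add_left inner_add_right inner_diff_left inner_diff_right
        inner_commute power2_eq_square)
  ultimately show ?thesis
    by (simp add: a_def power2_norm_eq_inner algebra_simps)
qed

lemma summable_if_decrease_bounded_below:
  fixes S c :: "nat \<Rightarrow> real"
  assumes c: "\<And>k. 0 \<le> c k" and dec: "\<And>k. S (Suc k) \<le> S k - c k" and bdd: "\<And>k. B \<le> S k"
  shows "summable c"
proof (rule summableI_nonneg_bounded[OF c])
  fix n
  have "(\<Sum>k<n. c k) \<le> S 0 - S n"
  proof (induction n)
    case (Suc n)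
    thus ?case using dec[of n] by simp
  qed simp
  thus "(\<Sum>k<n. c k) \<le> S 0 - B" using bdd[of n] by linarith
qed

lemma quasi_fejer_bounded:
  fixes a \<epsilon> :: "nat \<Rightarrow> real"
  assumes step: "\<And>k. a (Suc k) \<le> a k + \<epsilon> k" and \<epsilon>: "\<And>k. 0 \<le> \<epsilon> k" "summable \<epsilon>"
  shows "a k \<le> a 0 + suminf \<epsilon>"
proof -
  have "a k \<le> a 0 + (\<Sum>l<k. \<epsilon> l)"
  proof (induction k)
    case (Suc k)
    thus ?case using step[of k] by simp
  qed simp
  also have "(\<Sum>l<k. \<epsilon> l) \<le> suminf \<epsilon>"
    using \<epsilon> by (intro sum_le_suminf) auto
  finally show ?thesis by simp
qed

lemma quasi_fejer_tendsto_zero: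
  fixes a \<epsilon> :: "nat \<Rightarrow> real"
  assumes a: "\<And>k. 0 \<le> a k" and step: "\<And>k. a (Suc k) \<le> a k + \<epsilon> k"
    and \<epsilon>: "\<And>k. 0 \<le> \<epsilon> k" "summable \<epsilon>"
    and r: "strict_mono r" and sub: "(a \<circ> r) \<longlonglongrightarrow> 0"
  shows "a \<longlonglongrightarrow> 0"
proof -
  define tail where "tail k = suminf \<epsilon> - (\<Sum>l<k. \<epsilon> l)" for k
  define b where "b k = a k + tail k" for k
  have tail_nonneg: "0 \<le> tail k" for k
    using sum_le_suminf[OF \<epsilon>(2), of "{..<k}"] \<epsilon>(1) by (auto simp: tail_def)
  have tail_lim: "tail \<longlonglongrightarrow> 0"
    unfolding tail_def
    using tendsto_diff[OF tendsto_const[of "suminf \<epsilon>"] summable_LIMSEQ[OF \<epsilon>(2)]] by simp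
  have "decseq b"
  proof (rule decseq_SucI)
    show "b (Suc k) \<le> b k" for k
      using step[of k] by (simp add: b_def tail_def)
  qed
  then obtain L where L: "b \<longlonglongrightarrow> L"
    using decseq_convergent[of b 0] a tail_nonneg by (fastforce simp: b_def)
  have "(b \<circ> r) \<longlonglongrightarrow> 0"
    using tendsto_add[OF sub LIMSEQ_subseq_LIMSEQ[OF tail_lim r]] by (simp add: b_def o_def)
  with LIMSEQ_subseq_LIMSEQ[OF L r] have "b \<longlonglongrightarrow> 0"
    using L LIMSEQ_unique by blast
  thus ?thesis
    by (rule real_tendsto_sandwich[rotated 2, OF tendsto_const])
      (use a tail_nonneg in \<open>auto simp: b_def\<close>)
qed

lemma subseq_tendsto_zero_if_frequently_small:
  fixes d :: "nat \<Rightarrow> 'a::real_normed_vector"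
  assumes small: "\<And>\<delta>. 0 < \<delta> \<Longrightarrow> frequently (\<lambda>k. norm (d k) < \<delta>) sequentially"
  obtains r where "strict_mono r" "(d \<circ> r) \<longlonglongrightarrow> 0"
proof -
  have small': "\<exists>k'\<ge>K. norm (d k') < inverse (real (Suc n))" for K n
    using small[of "inverse (real (Suc n))"] by (auto simp: frequently_sequentially)
  have "\<exists>r. \<forall>n. norm (d (r n)) < inverse (real (Suc n)) \<and> r n < r (Suc n)"
  proof (rule dependent_nat_choice)
    show "\<exists>k. norm (d k) < inverse (real (Suc 0))"
      using small'[of 0 0] by blast
    show "\<exists>k'. norm (d k') < inverse (real (Suc (Suc n))) \<and> k < k'" for k n
      using small'[of "Suc k" "Suc n"] by (auto simp: Suc_le_eq)
  qed
  then obtain r where r: "\<And>n. norm (d (r n)) < inverse (real (Suc n)) \<and> r n < r (Suc n)"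
    by blast
  have "(\<lambda>n. norm (d (r n))) \<longlonglongrightarrow> 0"
    by (rule real_tendsto_sandwich[OF _ _ tendsto_const LIMSEQ_inverse_real_of_nat])
      (use r in \<open>auto intro: less_imp_le always_eventually simp del: of_nat_Suc\<close>)
  hence "(d \<circ> r) \<longlonglongrightarrow> 0"
    by (simp add: o_def tendsto_norm_zero_iff)
  moreover have "strict_mono r"
    using r by (simp add: strict_mono_Suc_iff)
  ultimately show ?thesis using that by blast
qed

lemma tendsto_Max_image:
  fixes f :: "'i \<Rightarrow> 'b \<Rightarrow> 'c::linorder_topology"
  assumes "finite I" "I \<noteq> {}" "\<And>i. i \<in> I \<Longrightarrow> ((\<lambda>n. f i n) \<longlongrightarrow> l i) F"
  shows "((\<lambda>n. Max ((\<lambda>i. f i n) ` I)) \<longlongrightarrow> Max (l ` I)) F"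
  using assms
proof (induction I rule: finite_ne_induct)
  case (insert i I)
  thus ?case by (simp add: tendsto_max)
qed simp

locale mpg_problem =
  fixes m :: nat
    and G :: "nat \<Rightarrow> 'a::euclidean_space \<Rightarrow> real"
    and DG :: "nat \<Rightarrow> 'a \<Rightarrow> 'a"
    and H :: "nat \<Rightarrow> 'a \<Rightarrow> ereal"
    and \<alpha> \<gamma> \<tau>1 \<tau>2 :: real
  assumes m_pos: "0 < m"
    and G_grad: "\<And>j x. j < m \<Longrightarrow> (G j has_derivative (\<lambda>h. DG j x \<bullet> h)) (at x)"
    and G_C1: "\<And>j. j < m \<Longrightarrow> continuous_on UNIV (DG j)"
    and G_convex: "\<And>j. j < m \<Longrightarrow> convex_on UNIV (G j)"
    and H_proper: "\<And>j. j < m \<Longrightarrow> proper_fun (H j)"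
    and H_convex: "\<And>j. j < m \<Longrightarrow> ereal_convex (H j)"
    and H_cont: "\<And>j. j < m \<Longrightarrow> continuous_on {x. H j x < \<infinity>} (H j)"
    and dom_closed: "closed (domF m H)"
    and \<alpha>_pos: "0 < \<alpha>" and \<gamma>_pos: "0 < \<gamma>" and \<gamma>_less: "\<gamma> < 2 / \<alpha>"
    and \<tau>1_pos: "0 < \<tau>1" and \<tau>2_less_1: "\<tau>2 < 1"
begin

abbreviation D :: "'a set" where
  "D \<equiv> domF m H"

(* Real-valued versions of H j, F j and psi x, used on D only: real_of_ereal sends \<infinity> to 0. *)

definition H_real :: "nat \<Rightarrow> 'a \<Rightarrow> real" where
  "H_real j x = real_of_ereal (H j x)"

definition F_real :: "nat \<Rightarrow> 'a \<Rightarrow> real" where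
  "F_real j x = G j x + H_real j x"

definition psi_term :: "'a \<Rightarrow> 'a \<Rightarrow> nat \<Rightarrow> real" where
  "psi_term x u j = DG j x \<bullet> (u - x) + H_real j u - H_real j x"

definition psi_real :: "'a \<Rightarrow> 'a \<Rightarrow> real" where
  "psi_real x u = Max (psi_term x u ` {..<m})"

definition prox_optimal :: "'a \<Rightarrow> 'a \<Rightarrow> bool" where
  "prox_optimal x p \<longleftrightarrow> p \<in> D \<and> (\<forall>u\<in>D. psi_real x p + (x - p) \<bullet> (u - p) / \<alpha> \<le> psi_real x u)"

definition descent_rate :: real where
  "descent_rate = 1 - \<alpha> * \<gamma> / 2"

lemma descent_rate_pos: "0 < descent_rate"
  using \<alpha>_pos \<gamma>_less by (simp add: descent_rate_def field_simps)

lemma H_eq_H_real: "x \<in> D \<Longrightarrow> j < m \<Longrightarrow> H j x = ereal (H_real j x)"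
  using H_proper[of j] unfolding domF_def proper_fun_def H_real_def
  by (cases "H j x") auto

lemma Fv_eq_F_real: "x \<in> D \<Longrightarrow> j < m \<Longrightarrow> Fv G H j x = ereal (F_real j x)"
  by (simp add: Fv_def F_real_def H_eq_H_real)

lemma Fle_iff_F_real:
  "x \<in> D \<Longrightarrow> y \<in> D \<Longrightarrow> Fle m G H y x \<longleftrightarrow> (\<forall>j<m. F_real j y \<le> F_real j x)"
  by (simp add: Fle_def Fv_eq_F_real)

lemma psi_eq_psi_real:
  assumes "x \<in> D" "u \<in> D"
  shows "psi m DG H x u = ereal (psi_real x u)"
proof -
  have "(\<lambda>j. ereal (DG j x \<bullet> (u - x)) + H j u - H j x) ` {..<m} = ereal ` psi_term x u ` {..<m}"
    using assms by (auto simp: H_eq_H_real psi_term_def image_image intro!: image_cong)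
  moreover have "ereal (Max (psi_term x u ` {..<m})) = Max (ereal ` psi_term x u ` {..<m})"
    using m_pos by (intro mono_Max_commute) (auto simp: mono_def)
  ultimately show ?thesis
    unfolding psi_def psi_real_def by simp
qed

lemma psi_eq_infinity:
  assumes x: "x \<in> D" and u: "u \<notin> D"
  shows "psi m DG H x u = \<infinity>"
proof -
  obtain j where j: "j < m" "H j u = \<infinity>"
    using u unfolding domF_def by auto
  have "(\<lambda>j. ereal (DG j x \<bullet> (u - x)) + H j u - H j x) j \<le> psi m DG H x u"
    unfolding psi_def using j by (intro Max_ge imageI) auto
  moreover have "ereal (DG j x \<bullet> (u - x)) + H j u - H j x = \<infinity>"
    using j x H_eq_H_real by simp
  ultimately show ?thesis by (simp add: top_unique[where 'a=ereal, unfolded top_ereal_def])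
qed

lemma phi_eq_psi_real:
  "x \<in> D \<Longrightarrow> u \<in> D \<Longrightarrow> phi m DG H \<alpha> x u = ereal (psi_real x u + (norm (u - x))\<^sup>2 / (2 * \<alpha>))"
  by (simp add: phi_def psi_eq_psi_real)

lemma psi_real_self: "psi_real x x = 0"
proof -
  have "psi_term x x ` {..<m} = {0}"
    using m_pos by (auto simp: psi_term_def)
  thus ?thesis by (simp add: psi_real_def)
qed

lemma psi_term_le_psi_real: "j < m \<Longrightarrow> psi_term x u j \<le> psi_real x u"
  unfolding psi_real_def by (intro Max_ge) auto

lemma psi_real_le: "(\<And>j. j < m \<Longrightarrow> psi_term x u j \<le> c) \<Longrightarrow> psi_real x u \<le> c"
  unfolding psi_real_def using m_pos by (subst Max_le_iff) auto

lemma psi_real_less: "(\<And>j. j < m \<Longrightarrow> psi_term x u j < c) \<Longrightarrow> psi_real x u < c"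
  unfolding psi_real_def using m_pos by (subst Max_less_iff) auto

lemma psi_real_nonpos_if_F_real_le:
  assumes "\<And>j. j < m \<Longrightarrow> F_real j u \<le> F_real j x"
  shows "psi_real x u \<le> 0"
proof (rule psi_real_le)
  fix j assume j: "j < m"
  have "G j x + DG j x \<bullet> (u - x) \<le> G j u"
    by (rule convex_gradient_inequality[OF G_grad[OF j] G_convex[OF j]])
  thus "psi_term x u j \<le> 0"
    using assms[OF j] by (simp add: psi_term_def F_real_def)
qed

lemma H_convex_comb_le:
  assumes "x \<in> D" "y \<in> D" "0 < t" "t < 1" "j < m"
  shows "H j ((1 - t) *\<^sub>R x + t *\<^sub>R y) \<le> ereal ((1 - t) * H_real j x + t * H_real j y)"
proof -
  have "H j ((1 - t) *\<^sub>R x + t *\<^sub>R y) \<le> ereal (1 - t) * H j x + ereal t * H j y"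
    using H_convex[OF assms(5)] assms(3,4) unfolding ereal_convex_def by blast
  also have "\<dots> = ereal ((1 - t) * H_real j x + t * H_real j y)"
    using assms(1,2,5) by (simp add: H_eq_H_real)
  finally show ?thesis .
qed

lemma convex_dom: "convex D"
  unfolding convex_alt
proof (intro ballI allI impI)
  fix x y and t :: real
  assume xy: "x \<in> D" "y \<in> D" and t: "0 \<le> t \<and> t \<le> 1"
  show "(1 - t) *\<^sub>R x + t *\<^sub>R y \<in> D"
  proof (cases "t = 0 \<or> t = 1")
    case False
    with t have t': "0 < t" "t < 1" by auto
    have "H j ((1 - t) *\<^sub>R x + t *\<^sub>R y) < \<infinity>" if "j < m" for j
      using H_convex_comb_le[OF xy t' that] by (cases "H j ((1 - t) *\<^sub>R x + t *\<^sub>R y)") auto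
    thus ?thesis unfolding domF_def by blast
  qed (use xy in auto)
qed

lemma convex_on_H_real: "j < m \<Longrightarrow> convex_on D (H_real j)"
proof (rule convex_onI[OF _ convex_dom])
  fix t :: real and x y
  assume j: "j < m" and t: "0 < t" "t < 1" and xy: "x \<in> D" "y \<in> D"
  have "(1 - t) *\<^sub>R x + t *\<^sub>R y \<in> D"
    using convexD_alt[OF convex_dom xy] t by simp
  with H_convex_comb_le[OF xy t j]
  show "H_real j ((1 - t) *\<^sub>R x + t *\<^sub>R y) \<le> (1 - t) * H_real j x + t * H_real j y"
    by (simp add: H_eq_H_real j)
qed

lemma convex_on_psi_real: "convex_on D (psi_real x)"
proof (rule convex_onI[OF _ convex_dom])
  fix s :: real and u v assume s: "0 < s" "s < 1" and uv: "u \<in> D" "v \<in> D"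
  show "psi_real x ((1 - s) *\<^sub>R u + s *\<^sub>R v) \<le> (1 - s) * psi_real x u + s * psi_real x v"
  proof (rule psi_real_le)
    fix j assume j: "j < m"
    let ?w = "(1 - s) *\<^sub>R u + s *\<^sub>R v"
    have "DG j x \<bullet> (?w - x) = (1 - s) * (DG j x \<bullet> (u - x)) + s * (DG j x \<bullet> (v - x))"
      by (simp add: algebra_simps)
    moreover have "H_real j ?w \<le> (1 - s) * H_real j u + s * H_real j v"
      using convex_onD[OF convex_on_H_real[OF j]] s uv by simp
    ultimately have "psi_term x ?w j \<le> (1 - s) * psi_term x u j + s * psi_term x v j"
      by (simp add: psi_term_def algebra_simps)
    also have "\<dots> \<le> (1 - s) * psi_real x u + s * psi_real x v"
      using s psi_term_le_psi_real[OF j] by (intro add_mono mult_left_mono) auto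
    finally show "psi_term x ?w j \<le> (1 - s) * psi_real x u + s * psi_real x v" .
  qed
qed

lemma prox_variational_inequality:
  assumes p: "p \<in> D" and u: "u \<in> D"
    and min: "\<And>w. w \<in> D \<Longrightarrow>
      psi_real x p + (norm (p - x))\<^sup>2 / (2 * \<alpha>) \<le> psi_real x w + (norm (w - x))\<^sup>2 / (2 * \<alpha>)"
  shows "psi_real x p + (x - p) \<bullet> (u - p) / \<alpha> \<le> psi_real x u"
proof -
  let ?P = "psi_real x p" and ?U = "psi_real x u" and ?N = "(norm (p - x))\<^sup>2"
  define c where "c = (p - x) \<bullet> (u - p)"
  define M where "M = (norm (u - p))\<^sup>2"
  \<comment> \<open>compare p with the points (1 - s) p + s u of the segment towards u, and let s tend to 0\<close>
  have "0 \<le> ?U - ?P + c / \<alpha> + s * (M / (2 * \<alpha>))" if s: "0 < s" "s < 1" for s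
  proof -
    define w where "w = (1 - s) *\<^sub>R p + s *\<^sub>R u"
    have w: "w \<in> D"
      using convexD_alt[OF convex_dom p u] s by (simp add: w_def)
    have wx: "w - x = (p - x) + s *\<^sub>R (u - p)"
      by (simp add: w_def algebra_simps)
    have norm_w: "(norm (w - x))\<^sup>2 = ?N + 2 * s * c + s\<^sup>2 * M"
      unfolding wx power2_norm_eq_inner c_def M_def
      by (simp add: inner_add_left inner_add_right inner_commute algebra_simps power2_eq_square)
    have "?P + ?N / (2 * \<alpha>) \<le> psi_real x w + (norm (w - x))\<^sup>2 / (2 * \<alpha>)"
      by (rule min[OF w])
    also have "\<dots> \<le> (1 - s) * ?P + s * ?U + (?N + 2 * s * c + s\<^sup>2 * M) / (2 * \<alpha>)"
      using convex_onD[OF convex_on_psi_real] p u s norm_w by (simp add: w_def)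
    finally have "?P + ?N / (2 * \<alpha>) \<le> (1 - s) * ?P + s * ?U + (?N + 2 * s * c + s\<^sup>2 * M) / (2 * \<alpha>)" .
    moreover have "(1 - s) * ?P + s * ?U + (?N + 2 * s * c + s\<^sup>2 * M) / (2 * \<alpha>) - (?P + ?N / (2 * \<alpha>))
        = s * (?U - ?P + c / \<alpha> + s * (M / (2 * \<alpha>)))"
      using \<alpha>_pos by (simp add: field_simps power2_eq_square)
    ultimately have "0 \<le> s * (?U - ?P + c / \<alpha> + s * (M / (2 * \<alpha>)))"
      by linarith
    thus ?thesis
      using s by (simp add: zero_le_mult_iff)
  qed
  hence "0 \<le> ?U - ?P + c / \<alpha>"
    by (rule nonneg_if_nonneg_plus_small_multiple)
  moreover have "(x - p) \<bullet> (u - p) = - c"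
    by (simp add: c_def inner_diff_left)
  ultimately show ?thesis by simp
qed

lemma is_arg_min_phi_prox_optimal:
  assumes x: "x \<in> D" and min: "is_arg_min (phi m DG H \<alpha> x) (\<lambda>_. True) p"
  shows "prox_optimal x p"
proof -
  have le: "phi m DG H \<alpha> x p \<le> phi m DG H \<alpha> x w" for w
    using min unfolding is_arg_min_def by (meson not_le)
  have p: "p \<in> D"
  proof (rule ccontr)
    assume "p \<notin> D"
    hence "phi m DG H \<alpha> x p = \<infinity>"
      using psi_eq_infinity[OF x] by (simp add: phi_def)
    with le[of x] show False
      using phi_eq_psi_real[OF x x] by (simp add: psi_real_self)
  qed
  have "psi_real x p + (norm (p - x))\<^sup>2 / (2 * \<alpha>) \<le> psi_real x w + (norm (w - x))\<^sup>2 / (2 * \<alpha>)"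
    if "w \<in> D" for w
    using le[of w] phi_eq_psi_real[OF x p] phi_eq_psi_real[OF x that] by simp
  with p show ?thesis
    unfolding prox_optimal_def by (blast intro: prox_variational_inequality)
qed

lemma prox_optimal_norm_le:
  assumes "x \<in> D" "prox_optimal x p"
  shows "(norm (p - x))\<^sup>2 \<le> - \<alpha> * psi_real x p"
proof -
  have "psi_real x p + (x - p) \<bullet> (x - p) / \<alpha> \<le> 0"
    using assms psi_real_self[of x] unfolding prox_optimal_def by fastforce
  thus ?thesis
    using \<alpha>_pos by (simp add: field_simps power2_norm_eq_inner norm_minus_commute[of p x])
qed

lemma prox_optimal_psi_real_nonpos:
  assumes "x \<in> D" "prox_optimal x p"
  shows "psi_real x p \<le> 0"
proof -
  have "\<alpha> * psi_real x p \<le> 0"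
    using prox_optimal_norm_le[OF assms] zero_le_power2[of "norm (p - x)"] by linarith
  thus ?thesis
    using \<alpha>_pos by (simp add: mult_le_0_iff)
qed

lemma step_in_dom: "x \<in> D \<Longrightarrow> p \<in> D \<Longrightarrow> 0 \<le> t \<Longrightarrow> t \<le> 1 \<Longrightarrow> x + t *\<^sub>R (p - x) \<in> D"
  using convexD_alt[OF convex_dom, of x p t] by (simp add: algebra_simps)

lemma armijo_decrease:
  assumes x: "x \<in> D" and p: "prox_optimal x p" and t: "0 < t" "t \<le> 1" and j: "j < m"
    and arm: "armijo G DG \<gamma> x (p - x) j t"
  shows "F_real j (x + t *\<^sub>R (p - x)) \<le> F_real j x + descent_rate * t * psi_real x p"
proof -
  let ?P = "psi_real x p" and ?N = "(norm (p - x))\<^sup>2"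
  have pD: "p \<in> D" using p by (simp add: prox_optimal_def)
  have "x + t *\<^sub>R (p - x) = (1 - t) *\<^sub>R x + t *\<^sub>R p"
    by (simp add: algebra_simps)
  hence H_le: "H_real j (x + t *\<^sub>R (p - x)) \<le> (1 - t) * H_real j x + t * H_real j p"
    using convex_onD[OF convex_on_H_real[OF j], of t x p] x pD t by simp
  have "F_real j (x + t *\<^sub>R (p - x))
      \<le> G j x + t * (DG j x \<bullet> (p - x)) + t * (\<gamma> / 2) * ?N + ((1 - t) * H_real j x + t * H_real j p)"
    using arm H_le unfolding armijo_def F_real_def by linarith
  also have "\<dots> = F_real j x + t * psi_term x p j + t * (\<gamma> / 2) * ?N"
    by (simp add: F_real_def psi_term_def algebra_simps)
  also have "\<dots> \<le> F_real j x + t * ?P + t * (\<gamma> / 2) * (- \<alpha> * ?P)"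
    using psi_term_le_psi_real[OF j] prox_optimal_norm_le[OF x p] t \<gamma>_pos
    by (intro add_mono mult_left_mono) auto
  also have "\<dots> = F_real j x + descent_rate * t * ?P"
    by (simp add: descent_rate_def algebra_simps)
  finally show ?thesis .
qed

lemma armijo_monotone:
  assumes "x \<in> D" "prox_optimal x p" "0 < t" "t \<le> 1" "j < m" "armijo G DG \<gamma> x (p - x) j t"
  shows "F_real j (x + t *\<^sub>R (p - x)) \<le> F_real j x"
proof -
  have "descent_rate * t * psi_real x p \<le> 0"
    using descent_rate_pos assms(3) prox_optimal_psi_real_nonpos[OF assms(1,2)]
    by (simp add: mult_nonneg_nonpos)
  with armijo_decrease[OF assms] show ?thesis by linarith
qed

lemma armijo_if_gradient_close:
  assumes j: "j < m" and s: "0 \<le> s"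
    and close: "norm (DG j (x + s *\<^sub>R d) - DG j x) \<le> \<gamma> / 2 * norm d"
  shows "armijo G DG \<gamma> x d j s"
proof -
  let ?w = "x + s *\<^sub>R d"
  have "G j ?w + DG j ?w \<bullet> (x - ?w) \<le> G j x"
    by (rule convex_gradient_inequality[OF G_grad[OF j] G_convex[OF j]])
  hence "G j ?w \<le> G j x + s * (DG j x \<bullet> d) + s * ((DG j ?w - DG j x) \<bullet> d)"
    by (simp add: inner_diff_left inner_diff_right algebra_simps)
  also have "(DG j ?w - DG j x) \<bullet> d \<le> \<gamma> / 2 * (norm d)\<^sup>2"
    using norm_cauchy_schwarz[of "DG j ?w - DG j x" d] close
      mult_right_mono[OF close norm_ge_zero[of d]]
    by (simp add: power2_eq_square mult.assoc)
  finally show ?thesis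
    using s unfolding armijo_def by (simp add: mult_left_mono mult.assoc)
qed

lemma Fle_if_armijo_all:
  assumes x: "x \<in> D" and p: "prox_optimal x p" and t: "0 < t" "t \<le> 1"
    and arm: "\<forall>j<m. armijo G DG \<gamma> x (p - x) j t"
  shows "Fle m G H (x + t *\<^sub>R (p - x)) x"
proof -
  have "x + t *\<^sub>R (p - x) \<in> D"
    using step_in_dom[OF x _ less_imp_le[OF t(1)] t(2)] p by (simp add: prox_optimal_def)
  thus ?thesis
    using armijo_monotone[OF x p t] arm Fle_iff_F_real[OF x] by simp
qed

lemma mpg_step_accepted_index:
  assumes x: "x \<in> D" and step: "mpg_step m G DG H \<alpha> \<gamma> \<tau>1 \<tau>2 x x'"
  obtains p ts N where "prox_optimal x p" "ts 0 = 1"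
    "\<And>i. \<tau>1 * ts i \<le> ts (Suc i) \<and> ts (Suc i) \<le> \<tau>2 * ts i"
    "x' = x + ts N *\<^sub>R (p - x)" "Fle m G H x' x" "\<exists>j<m. armijo G DG \<gamma> x (p - x) j (ts N)"
    "\<And>n. N = Suc n \<Longrightarrow> \<exists>j<m. \<not> armijo G DG \<gamma> x (p - x) j (ts n)"
proof -
  from step obtain p js ts N1 tk where min: "is_arg_min (phi m DG H \<alpha> x) (\<lambda>_. True) p"
    and js: "js < m" and ts0: "ts 0 = 1" and tsS: "\<And>i. \<tau>1 * ts i \<le> ts (Suc i) \<and> ts (Suc i) \<le> \<tau>2 * ts i"
    and arm_N1: "armijo G DG \<gamma> x (p - x) js (ts N1)"
    and fail_before_N1: "\<forall>i<N1. \<not> armijo G DG \<gamma> x (p - x) js (ts i)"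
    and cases: "(Fle m G H (x + ts N1 *\<^sub>R (p - x)) x \<and> tk = ts N1) \<or>
        (\<not> Fle m G H (x + ts N1 *\<^sub>R (p - x)) x \<and>
         (\<exists>N2>N1. (\<forall>j<m. armijo G DG \<gamma> x (p - x) j (ts N2)) \<and>
            (\<forall>i. N1 < i \<and> i < N2 \<longrightarrow> \<not> (\<forall>j<m. armijo G DG \<gamma> x (p - x) j (ts i))) \<and>
            tk = ts N2))"
    and x': "x' = x + tk *\<^sub>R (p - x)"
    unfolding mpg_step_def by blast
  have p: "prox_optimal x p"
    by (rule is_arg_min_phi_prox_optimal[OF x min])
  have ts: "0 < ts i" "ts i \<le> 1" for i
    using step_sizes_in_unit_interval[OF ts0 tsS \<tau>1_pos \<tau>2_less_1] by auto
  note that = that[OF p ts0 tsS]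
  show ?thesis
  proof (cases "Fle m G H (x + ts N1 *\<^sub>R (p - x)) x")
    case True
    with cases x' have "x' = x + ts N1 *\<^sub>R (p - x)"
      by blast
    with True js arm_N1 fail_before_N1 show ?thesis
      by (intro that[of N1]) auto
  next
    case False
    with cases obtain N2 where N2: "N1 < N2" "\<forall>j<m. armijo G DG \<gamma> x (p - x) j (ts N2)"
        "\<forall>i. N1 < i \<and> i < N2 \<longrightarrow> \<not> (\<forall>j<m. armijo G DG \<gamma> x (p - x) j (ts i))"
      and x'_eq: "x' = x + ts N2 *\<^sub>R (p - x)"
      using x' by blast
    have "\<not> (\<forall>j<m. armijo G DG \<gamma> x (p - x) j (ts N1))"
      using False Fle_if_armijo_all[OF x p ts] by blast
    with N2(1,3) have "\<exists>j<m. \<not> armijo G DG \<gamma> x (p - x) j (ts n)" if "N2 = Suc n" for n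
      using that by (cases "n = N1") auto
    moreover have "Fle m G H x' x"
      using Fle_if_armijo_all[OF x p ts N2(2)] x'_eq by simp
    ultimately show ?thesis
      using N2(2) x'_eq m_pos by (intro that[of N2]) auto
  qed
qed

lemma mpg_step_descent:
  assumes x: "x \<in> D" and step: "mpg_step m G DG H \<alpha> \<gamma> \<tau>1 \<tau>2 x x'"
  obtains p t where "prox_optimal x p" "0 < t" "t \<le> 1" "x' = x + t *\<^sub>R (p - x)"
    "\<And>j. j < m \<Longrightarrow> F_real j x' \<le> F_real j x"
    "\<exists>j<m. F_real j x' \<le> F_real j x + descent_rate * t * psi_real x p"
    "t < 1 \<Longrightarrow> \<exists>s j. j < m \<and> 0 < s \<and> s \<le> 1 \<and> \<tau>1 * s \<le> t \<and> \<not> armijo G DG \<gamma> x (p - x) j s"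
proof -
  obtain p ts N where p: "prox_optimal x p" and ts0: "ts 0 = 1"
    and tsS: "\<And>i. \<tau>1 * ts i \<le> ts (Suc i) \<and> ts (Suc i) \<le> \<tau>2 * ts i"
    and x': "x' = x + ts N *\<^sub>R (p - x)" and Fle: "Fle m G H x' x"
    and arm: "\<exists>j<m. armijo G DG \<gamma> x (p - x) j (ts N)"
    and rejected: "\<And>n. N = Suc n \<Longrightarrow> \<exists>j<m. \<not> armijo G DG \<gamma> x (p - x) j (ts n)"
    using mpg_step_accepted_index[OF x step] by blast
  have ts: "0 < ts i" "ts i \<le> 1" for i
    using step_sizes_in_unit_interval[OF ts0 tsS \<tau>1_pos \<tau>2_less_1] by auto
  have x'D: "x' \<in> D"
    using step_in_dom[OF x _ less_imp_le[OF ts(1)] ts(2)] p x' by (simp add: prox_optimal_def)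
  show ?thesis
  proof (rule that[OF p ts[of N] x'])
    show "F_real j x' \<le> F_real j x" if "j < m" for j
      using Fle Fle_iff_F_real[OF x x'D] that by simp
    show "\<exists>j<m. F_real j x' \<le> F_real j x + descent_rate * ts N * psi_real x p"
      using armijo_decrease[OF x p ts] arm x' by blast
    assume "ts N < 1"
    with ts0 obtain n where n: "N = Suc n"
      by (cases N) auto
    with rejected obtain j where "j < m" "\<not> armijo G DG \<gamma> x (p - x) j (ts n)"
      by blast
    thus "\<exists>s j. j < m \<and> 0 < s \<and> s \<le> 1 \<and> \<tau>1 * s \<le> ts N \<and> \<not> armijo G DG \<gamma> x (p - x) j s"
      using ts[of n] tsS[of n] n by blast
  qed
qed

lemma G_tendsto: "j < m \<Longrightarrow> (f \<longlongrightarrow> l) F \<Longrightarrow> ((\<lambda>n. G j (f n)) \<longlongrightarrow> G j l) F"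
  using G_grad by (intro isCont_tendsto_compose[of l "G j"]) (auto intro: has_derivative_continuous)

lemma DG_tendsto: "j < m \<Longrightarrow> (f \<longlongrightarrow> l) F \<Longrightarrow> ((\<lambda>n. DG j (f n)) \<longlongrightarrow> DG j l) F"
  using continuous_on_tendsto_compose[OF G_C1] by simp

lemma gradients_eventually_close:
  assumes x: "x \<longlonglongrightarrow> l" and y: "y \<longlonglongrightarrow> l" and \<epsilon>: "0 < \<epsilon>"
  shows "\<forall>\<^sub>F k in sequentially. \<forall>i\<in>{..<m}. norm (DG i (y k) - DG i (x k)) < \<epsilon>"
proof -
  have "\<forall>\<^sub>F k in sequentially. norm (DG i (y k) - DG i (x k)) < \<epsilon>" if "i \<in> {..<m}" for i
  proof -
    have "(\<lambda>k. norm (DG i (y k) - DG i (x k))) \<longlonglongrightarrow> norm (DG i l - DG i l)"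
      using that by (intro tendsto_norm tendsto_diff DG_tendsto x y) simp_all
    thus ?thesis
      using \<epsilon> by (intro order_tendstoD(2)) auto
  qed
  thus ?thesis
    by (auto intro!: eventually_ball_finite)
qed

lemma H_real_tendsto:
  assumes j: "j < m" and f: "(f \<longlongrightarrow> l) F" and l: "l \<in> D" and ev: "\<forall>\<^sub>F n in F. f n \<in> D"
  shows "((\<lambda>n. H_real j (f n)) \<longlongrightarrow> H_real j l) F"
proof -
  have "\<forall>\<^sub>F n in F. f n \<in> {x. H j x < \<infinity>}" "l \<in> {x. H j x < \<infinity>}"
    using ev l j by (auto simp: domF_def elim: eventually_mono)
  hence "((\<lambda>n. H j (f n)) \<longlongrightarrow> H j l) F"
    using continuous_on_tendsto_compose[OF H_cont[OF j] f] by blast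
  hence "((\<lambda>n. H j (f n)) \<longlongrightarrow> ereal (H_real j l)) F"
    using H_eq_H_real[OF l j] by simp
  thus ?thesis
    unfolding H_real_def by (rule lim_real_of_ereal)
qed

lemma F_real_tendsto:
  "j < m \<Longrightarrow> (f \<longlongrightarrow> l) F \<Longrightarrow> l \<in> D \<Longrightarrow> \<forall>\<^sub>F n in F. f n \<in> D \<Longrightarrow>
    ((\<lambda>n. F_real j (f n)) \<longlongrightarrow> F_real j l) F"
  unfolding F_real_def by (intro tendsto_add G_tendsto H_real_tendsto)

lemma psi_term_tendsto:
  assumes j: "j < m" and "(f \<longlongrightarrow> x) F" "(g \<longlongrightarrow> u) F" "x \<in> D" "u \<in> D"
    "\<forall>\<^sub>F n in F. f n \<in> D" "\<forall>\<^sub>F n in F. g n \<in> D"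
  shows "((\<lambda>n. psi_term (f n) (g n) j) \<longlongrightarrow> psi_term x u j) F"
  unfolding psi_term_def using assms
  by (intro tendsto_diff tendsto_add tendsto_inner DG_tendsto H_real_tendsto)

lemma psi_real_tendsto:
  assumes "(f \<longlongrightarrow> x) F" "(g \<longlongrightarrow> u) F" "x \<in> D" "u \<in> D"
    "\<forall>\<^sub>F n in F. f n \<in> D" "\<forall>\<^sub>F n in F. g n \<in> D"
  shows "((\<lambda>n. psi_real (f n) (g n)) \<longlongrightarrow> psi_real x u) F"
  unfolding psi_real_def using m_pos assms
  by (intro tendsto_Max_image psi_term_tendsto) auto

lemma weakly_pareto_if_prox_limit:
  assumes xb: "xb \<in> D" and x: "x \<longlonglongrightarrow> xb" and p: "p \<longlonglongrightarrow> xb"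
    and xD: "\<And>n. x n \<in> D" and opt: "\<And>n. prox_optimal (x n) (p n)"
  shows "weakly_pareto m G H xb"
  unfolding weakly_pareto_def
proof
  assume "\<exists>y. \<forall>j<m. Fv G H j y < Fv G H j xb"
  then obtain y where y: "\<And>j. j < m \<Longrightarrow> Fv G H j y < Fv G H j xb"
    by blast
  have yD: "y \<in> D"
    unfolding domF_def
  proof (intro CollectI allI impI)
    fix j assume j: "j < m"
    show "H j y < \<infinity>"
      using y[OF j] by (cases "H j y") (auto simp: Fv_def)
  qed
  have "psi_real xb y < 0"
  proof (rule psi_real_less)
    fix j assume j: "j < m"
    have "G j xb + DG j xb \<bullet> (y - xb) \<le> G j y"
      by (rule convex_gradient_inequality[OF G_grad[OF j] G_convex[OF j]])
    moreover have "F_real j y < F_real j xb"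
      using y[OF j] Fv_eq_F_real[OF yD j] Fv_eq_F_real[OF xb j] by simp
    ultimately show "psi_term xb y j < 0"
      by (simp add: psi_term_def F_real_def)
  qed
  moreover have "0 \<le> psi_real xb y"
  proof (rule tendsto_le[OF trivial_limit_sequentially])
    show "(\<lambda>n. psi_real (x n) y) \<longlonglongrightarrow> psi_real xb y"
      using xb yD xD by (intro psi_real_tendsto x tendsto_const) auto
    have pD: "p n \<in> D" for n
      using opt[of n] by (simp add: prox_optimal_def)
    have "(\<lambda>n. psi_term (x n) (p n) 0 + (x n - p n) \<bullet> (y - p n) / \<alpha>)
        \<longlonglongrightarrow> psi_term xb xb 0 + (xb - xb) \<bullet> (y - xb) / \<alpha>"
      using m_pos \<alpha>_pos xb xD pD
      by (intro tendsto_add psi_term_tendsto x p tendsto_divide tendsto_inner tendsto_diff tendsto_const) auto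
    thus "(\<lambda>n. psi_term (x n) (p n) 0 + (x n - p n) \<bullet> (y - p n) / \<alpha>) \<longlonglongrightarrow> 0"
      by (simp add: psi_term_def)
    show "\<forall>\<^sub>F n in sequentially. psi_term (x n) (p n) 0 + (x n - p n) \<bullet> (y - p n) / \<alpha> \<le> psi_real (x n) y"
      using opt psi_term_le_psi_real[OF m_pos] yD unfolding prox_optimal_def
      by (intro always_eventually allI) (meson add_right_mono order.trans)
  qed
  ultimately show False by simp
qed

end

locale mpg_trajectory = mpg_problem +
  fixes xs p :: "nat \<Rightarrow> 'a" and t :: "nat \<Rightarrow> real"
  assumes A1: "assumption_A1 m G H"
    and xs_in_dom: "\<And>k. xs k \<in> D"
    and prox: "\<And>k. prox_optimal (xs k) (p k)"
    and t_pos: "\<And>k. 0 < t k" and t_le_1: "\<And>k. t k \<le> 1"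
    and xs_Suc: "\<And>k. xs (Suc k) = xs k + t k *\<^sub>R (p k - xs k)"
    and F_real_mono: "\<And>j k. j < m \<Longrightarrow> F_real j (xs (Suc k)) \<le> F_real j (xs k)"
    and sufficient_decrease:
      "\<And>k. \<exists>j<m. F_real j (xs (Suc k)) \<le> F_real j (xs k) + descent_rate * t k * psi_real (xs k) (p k)"
    and backtracking: "\<And>k. t k < 1 \<Longrightarrow>
      \<exists>s j. j < m \<and> 0 < s \<and> s \<le> 1 \<and> \<tau>1 * s \<le> t k \<and> \<not> armijo G DG \<gamma> (xs k) (p k - xs k) j s"
begin

definition gap :: "nat \<Rightarrow> real" where
  "gap k = - psi_real (xs k) (p k)"

lemma direction_norm_le_gap: "(norm (p k - xs k))\<^sup>2 \<le> \<alpha> * gap k"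
  using prox_optimal_norm_le[OF xs_in_dom prox] by (simp add: gap_def)

lemma gap_nonneg: "0 \<le> gap k"
  using prox_optimal_psi_real_nonpos[OF xs_in_dom prox] by (simp add: gap_def)

lemma step_gap_nonneg: "0 \<le> t k * gap k"
  using t_pos[of k] gap_nonneg[of k] by simp

lemma F_real_decseq: "j < m \<Longrightarrow> decseq (\<lambda>k. F_real j (xs k))"
  using F_real_mono by (simp add: decseq_Suc_iff)

lemma common_lower_bound:
  obtains z where "z \<in> D" "\<And>j k. j < m \<Longrightarrow> F_real j z \<le> F_real j (xs k)"
proof -
  have "Fle m G H (xs (Suc k)) (xs k)" for k
    using Fle_iff_F_real[OF xs_in_dom xs_in_dom] F_real_mono by simp
  then obtain z where z: "z \<in> D" "\<And>k. Fle m G H z (xs k)"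
    using A1 xs_in_dom unfolding assumption_A1_def by blast
  show ?thesis
  proof (rule that[OF z(1)])
    show "F_real j z \<le> F_real j (xs k)" if "j < m" for j k
      using z(2)[of k] Fle_iff_F_real[OF xs_in_dom z(1)] that by simp
  qed
qed

lemma summable_step_gap: "summable (\<lambda>k. t k * gap k)"
proof -
  define S where "S k = (\<Sum>j<m. F_real j (xs k))" for k
  obtain z where z: "\<And>j k. j < m \<Longrightarrow> F_real j z \<le> F_real j (xs k)"
    using common_lower_bound by blast
  have "0 \<le> descent_rate * (t k * gap k)" for k
    using descent_rate_pos step_gap_nonneg by simp
  moreover have "S (Suc k) \<le> S k - descent_rate * (t k * gap k)" for k
  proof -
    obtain i where i: "i < m"
      "F_real i (xs (Suc k)) \<le> F_real i (xs k) - descent_rate * (t k * gap k)"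
      using sufficient_decrease[of k] by (auto simp: gap_def)
    have "S (Suc k) = F_real i (xs (Suc k)) + (\<Sum>j\<in>{..<m} - {i}. F_real j (xs (Suc k)))"
      unfolding S_def using i by (subst sum.remove[of _ i]) auto
    also have "\<dots> \<le> (F_real i (xs k) - descent_rate * (t k * gap k)) + (\<Sum>j\<in>{..<m} - {i}. F_real j (xs k))"
      using i F_real_mono by (intro add_mono sum_mono) auto
    also have "\<dots> = S k - descent_rate * (t k * gap k)"
      unfolding S_def using i by (subst (2) sum.remove[of _ i]) auto
    finally show ?thesis .
  qed
  moreover have "(\<Sum>j<m. F_real j z) \<le> S k" for k
    unfolding S_def by (intro sum_mono z) simp
  ultimately have "summable (\<lambda>k. descent_rate * (t k * gap k))"
    by (rule summable_if_decrease_bounded_below)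
  thus ?thesis
    using descent_rate_pos by (simp add: summable_cmult_iff)
qed

lemma quasi_fejer:
  assumes w: "w \<in> D" and below: "\<And>j k. j < m \<Longrightarrow> F_real j w \<le> F_real j (xs k)"
  shows "(norm (xs (Suc k) - w))\<^sup>2 \<le> (norm (xs k - w))\<^sup>2 + 2 * \<alpha> * (t k * gap k)"
proof -
  have "psi_real (xs k) w \<le> 0"
    using below by (intro psi_real_nonpos_if_F_real_le)
  hence "(xs k - p k) \<bullet> (w - p k) / \<alpha> \<le> gap k"
    using prox[of k] w unfolding prox_optimal_def gap_def by fastforce
  hence "(xs k - p k) \<bullet> (w - p k) \<le> \<alpha> * gap k"
    using \<alpha>_pos by (simp add: field_simps)
  from norm_sq_step_toward_le[OF this less_imp_le[OF t_pos] t_le_1]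
  show ?thesis
    by (simp add: xs_Suc algebra_simps)
qed

lemma bounded_trajectory: "bounded (range xs)"
proof -
  obtain z where z: "z \<in> D" "\<And>j k. j < m \<Longrightarrow> F_real j z \<le> F_real j (xs k)"
    using common_lower_bound by blast
  define C where "C = (norm (xs 0 - z))\<^sup>2 + suminf (\<lambda>k. 2 * \<alpha> * (t k * gap k))"
  have "(norm (xs k - z))\<^sup>2 \<le> C" for k
    unfolding C_def
  proof (rule quasi_fejer_bounded)
    show "(norm (xs (Suc k) - z))\<^sup>2 \<le> (norm (xs k - z))\<^sup>2 + 2 * \<alpha> * (t k * gap k)" for k
      by (rule quasi_fejer[OF z])
    show "0 \<le> 2 * \<alpha> * (t k * gap k)" for k
      using step_gap_nonneg \<alpha>_pos by simp
    show "summable (\<lambda>k. 2 * \<alpha> * (t k * gap k))"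
      using summable_step_gap by (rule summable_mult)
  qed
  hence "norm (xs k - z) \<le> sqrt C" for k
    by (simp add: real_le_rsqrt)
  hence "dist z (xs k) \<le> sqrt C" for k
    by (simp add: dist_norm norm_minus_commute)
  thus ?thesis
    unfolding bounded_def by blast
qed

lemma limit_point_lower_bound:
  assumes r: "strict_mono r" and lim: "(xs \<circ> r) \<longlonglongrightarrow> xb" and xb: "xb \<in> D" and j: "j < m"
  shows "F_real j xb \<le> F_real j (xs k)"
proof (rule Lim_bounded[OF F_real_tendsto[OF j lim xb]])
  show "\<forall>n\<ge>k. F_real j ((xs \<circ> r) n) \<le> F_real j (xs k)"
  proof (intro allI impI)
    fix n assume "k \<le> n"
    hence "k \<le> r n"
      using seq_suble[OF r, of n] by linarith
    thus "F_real j ((xs \<circ> r) n) \<le> F_real j (xs k)"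
      using decseqD[OF F_real_decseq[OF j]] by simp
  qed
qed (simp add: xs_in_dom)

lemma trajectory_converges:
  obtains xb where "xb \<in> D" "xs \<longlonglongrightarrow> xb"
proof -
  obtain xb r where r: "strict_mono r" and lim: "(xs \<circ> r) \<longlonglongrightarrow> xb"
    using bounded_imp_convergent_subsequence[OF bounded_trajectory] by blast
  have xb: "xb \<in> D"
    using closed_sequentially[OF dom_closed _ lim] xs_in_dom by auto
  define a where "a k = (norm (xs k - xb))\<^sup>2" for k
  have "(a \<circ> r) \<longlonglongrightarrow> 0"
    using tendsto_power[OF tendsto_norm[OF LIM_zero[OF lim]], of 2] by (simp add: a_def o_def)
  hence "a \<longlonglongrightarrow> 0"
  proof (rule quasi_fejer_tendsto_zero[OF _ _ _ _ r, rotated -1])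
    show "0 \<le> a k" for k
      by (simp add: a_def)
    show "a (Suc k) \<le> a k + 2 * \<alpha> * (t k * gap k)" for k
      unfolding a_def by (rule quasi_fejer[OF xb limit_point_lower_bound[OF r lim xb]])
    show "0 \<le> 2 * \<alpha> * (t k * gap k)" for k
      using step_gap_nonneg \<alpha>_pos by simp
    show "summable (\<lambda>k. 2 * \<alpha> * (t k * gap k))"
      using summable_step_gap by (rule summable_mult)
  qed
  hence "xs \<longlonglongrightarrow> xb"
    using tendsto_real_sqrt[of a 0] by (simp add: a_def tendsto_norm_zero_iff LIM_zero_iff)
  with xb that show ?thesis by blast
qed

lemma step_size_tendsto_zero_if_directions_large:
  assumes \<delta>: "0 < \<delta>" and large: "\<forall>\<^sub>F k in sequentially. \<delta> \<le> norm (p k - xs k)"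
  shows "t \<longlonglongrightarrow> 0"
proof (rule real_tendsto_sandwich[OF _ _ tendsto_const])
  show "\<forall>\<^sub>F k in sequentially. 0 \<le> t k"
    using t_pos by (simp add: less_imp_le)
  show "\<forall>\<^sub>F k in sequentially. t k \<le> \<alpha> / \<delta>\<^sup>2 * (t k * gap k)"
    using large
  proof eventually_elim
    case (elim k)
    have "\<delta>\<^sup>2 \<le> \<alpha> * gap k"
      using power_mono[OF elim, of 2] \<delta> direction_norm_le_gap[of k] by linarith
    hence "t k * \<delta>\<^sup>2 \<le> t k * (\<alpha> * gap k)"
      using t_pos[of k] by (intro mult_left_mono) auto
    thus ?case
      using \<delta> by (simp add: field_simps)
  qed
  show "(\<lambda>k. \<alpha> / \<delta>\<^sup>2 * (t k * gap k)) \<longlonglongrightarrow> 0"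
    by (intro tendsto_mult_right_zero summable_LIMSEQ_zero summable_step_gap)
qed

lemma trial_step_norm_le:
  assumes s: "0 < s" "s \<le> 1" "\<tau>1 * s \<le> t k"
  shows "norm (s *\<^sub>R (p k - xs k)) \<le> sqrt (\<alpha> / \<tau>1 * (t k * gap k))"
proof -
  have "(norm (s *\<^sub>R (p k - xs k)))\<^sup>2 = s\<^sup>2 * (norm (p k - xs k))\<^sup>2"
    by (simp add: power_mult_distrib)
  also have "\<dots> \<le> s * (\<alpha> * gap k)"
    using s direction_norm_le_gap[of k] mult_left_le_one_le[of s s]
    by (intro mult_mono) (auto simp: power2_eq_square)
  also have "\<dots> \<le> (t k / \<tau>1) * (\<alpha> * gap k)"
    using s \<tau>1_pos \<alpha>_pos gap_nonneg[of k] by (intro mult_right_mono) (auto simp: field_simps)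
  also have "\<dots> = \<alpha> / \<tau>1 * (t k * gap k)"
    by simp
  finally show ?thesis
    by (rule real_le_rsqrt)
qed

lemma frequently_small_direction:
  assumes conv: "xs \<longlonglongrightarrow> xb" and \<delta>: "0 < \<delta>"
  shows "\<exists>\<^sub>F k in sequentially. norm (p k - xs k) < \<delta>"
proof (rule ccontr)
  assume "\<not> ?thesis"
  hence large: "\<forall>\<^sub>F k in sequentially. \<delta> \<le> norm (p k - xs k)"
    by (simp add: not_frequently not_less)
  have shortened: "\<forall>\<^sub>F k in sequentially. t k < 1"
    using order_tendstoD(2)[OF step_size_tendsto_zero_if_directions_large[OF \<delta> large]] by simp
  obtain s j where sj: "\<And>k. t k < 1 \<Longrightarrow> j k < m \<and> 0 < s k \<and> s k \<le> 1 \<and> \<tau>1 * s k \<le> t k \<and>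
      \<not> armijo G DG \<gamma> (xs k) (p k - xs k) (j k) (s k)"
    using backtracking by metis
  have bound: "\<forall>\<^sub>F k in sequentially. norm (s k *\<^sub>R (p k - xs k)) \<le> sqrt (\<alpha> / \<tau>1 * (t k * gap k))"
    using shortened
  proof eventually_elim
    case (elim k)
    with sj[OF elim] show ?case
      by (intro trial_step_norm_le) auto
  qed
  have "(\<lambda>k. sqrt (\<alpha> / \<tau>1 * (t k * gap k))) \<longlonglongrightarrow> sqrt 0"
    by (intro tendsto_real_sqrt tendsto_mult_right_zero summable_LIMSEQ_zero summable_step_gap)
  hence "(\<lambda>k. norm (s k *\<^sub>R (p k - xs k))) \<longlonglongrightarrow> 0"
    by (intro real_tendsto_sandwich[OF _ bound tendsto_const]) simp_all
  hence "(\<lambda>k. s k *\<^sub>R (p k - xs k)) \<longlonglongrightarrow> 0"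
    by (simp only: tendsto_norm_zero_iff)
  from tendsto_add[OF conv this]
  have "(\<lambda>k. xs k + s k *\<^sub>R (p k - xs k)) \<longlonglongrightarrow> xb"
    by simp
  moreover have "0 < \<gamma> / 2 * \<delta>"
    using \<gamma>_pos \<delta> by simp
  ultimately have "\<forall>\<^sub>F k in sequentially. \<forall>i\<in>{..<m}.
      norm (DG i (xs k + s k *\<^sub>R (p k - xs k)) - DG i (xs k)) < \<gamma> / 2 * \<delta>"
    by (rule gradients_eventually_close[OF conv])
  with shortened large have "\<forall>\<^sub>F k in sequentially. False"
  proof eventually_elim
    case (elim k)
    \<comment> \<open>the rejected trial step is short enough to pass the Armijo test\<close>
    note sk = sj[OF elim(1)]
    have "norm (DG (j k) (xs k + s k *\<^sub>R (p k - xs k)) - DG (j k) (xs k)) < \<gamma> / 2 * \<delta>"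
      using sk elim(3) by blast
    also have "\<gamma> / 2 * \<delta> \<le> \<gamma> / 2 * norm (p k - xs k)"
      using elim(2) \<gamma>_pos by simp
    finally have "armijo G DG \<gamma> (xs k) (p k - xs k) (j k) (s k)"
      using sk by (intro armijo_if_gradient_close) auto
    with sk show False by blast
  qed
  thus False by simp
qed

theorem converges_to_weakly_pareto: "\<exists>xb. xs \<longlonglongrightarrow> xb \<and> weakly_pareto m G H xb"
proof -
  obtain xb where xb: "xb \<in> D" and conv: "xs \<longlonglongrightarrow> xb"
    using trajectory_converges by blast
  obtain r where r: "strict_mono r" and small: "((\<lambda>k. p k - xs k) \<circ> r) \<longlonglongrightarrow> 0"
    using subseq_tendsto_zero_if_frequently_small[OF frequently_small_direction[OF conv]] by blast
  have xs_r: "(xs \<circ> r) \<longlonglongrightarrow> xb"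
    using LIMSEQ_subseq_LIMSEQ[OF conv r] .
  have "(p \<circ> r) \<longlonglongrightarrow> xb"
    using tendsto_add[OF xs_r small] by (simp add: o_def)
  with xb xs_r have "weakly_pareto m G H xb"
    by (intro weakly_pareto_if_prox_limit[where x = "xs \<circ> r" and p = "p \<circ> r"]) (auto simp: xs_in_dom prox)
  with conv show ?thesis by blast
qed

end

lemma (in mpg_problem) mpg_sequence_trajectory:
  assumes A1: "assumption_A1 m G H" and x0: "xs 0 \<in> D"
    and steps: "\<And>k. mpg_step m G DG H \<alpha> \<gamma> \<tau>1 \<tau>2 (xs k) (xs (Suc k))"
  obtains p t where "mpg_trajectory m G DG H \<alpha> \<gamma> \<tau>1 \<tau>2 xs p t"
proof -
  define step_data where "step_data k p t \<longleftrightarrow> prox_optimal (xs k) p \<and> 0 < t \<and> t \<le> 1 \<and>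
      xs (Suc k) = xs k + t *\<^sub>R (p - xs k) \<and> (\<forall>j<m. F_real j (xs (Suc k)) \<le> F_real j (xs k)) \<and>
      (\<exists>j<m. F_real j (xs (Suc k)) \<le> F_real j (xs k) + descent_rate * t * psi_real (xs k) p) \<and>
      (t < 1 \<longrightarrow> (\<exists>s j. j < m \<and> 0 < s \<and> s \<le> 1 \<and> \<tau>1 * s \<le> t \<and> \<not> armijo G DG \<gamma> (xs k) (p - xs k) j s))"
    for k p t
  have step: "\<exists>p t. step_data k p t" if "xs k \<in> D" for k
    using mpg_step_descent[OF that steps[of k]] unfolding step_data_def by metis
  have xs_in_dom: "xs k \<in> D" for k
  proof (induction k)
    case (Suc k)
    then obtain p t where "step_data k p t"
      using step by blast
    with Suc show ?case
      unfolding step_data_def prox_optimal_def using step_in_dom by auto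
  qed (rule x0)
  obtain p t where "\<And>k. step_data k (p k) (t k)"
    using step[OF xs_in_dom] by metis
  hence "mpg_trajectory_axioms m G DG H \<alpha> \<gamma> \<tau>1 xs p t"
    using A1 xs_in_dom unfolding step_data_def by unfold_locales blast+
  with that show ?thesis
    using mpg_trajectory.intro[OF mpg_problem_axioms] by blast
qed

theorem mainTheorem4:
  fixes m :: nat
    and G :: "nat \<Rightarrow> 'a::euclidean_space \<Rightarrow> real"
    and DG :: "nat \<Rightarrow> 'a \<Rightarrow> 'a"
    and H :: "nat \<Rightarrow> 'a \<Rightarrow> ereal"
    and \<alpha> \<gamma> \<tau>1 \<tau>2 :: real
    and xs :: "nat \<Rightarrow> 'a"
  assumes m_pos: "0 < m"
    and G_grad: "\<And>j x. j < m \<Longrightarrow> (G j has_derivative (\<lambda>h. DG j x \<bullet> h)) (at x)"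
    and G_C1: "\<And>j. j < m \<Longrightarrow> continuous_on UNIV (DG j)"
    and G_convex: "\<And>j. j < m \<Longrightarrow> convex_on UNIV (G j)"
    and H_proper: "\<And>j. j < m \<Longrightarrow> proper_fun (H j)"
    and H_convex: "\<And>j. j < m \<Longrightarrow> ereal_convex (H j)"
    and H_cont: "\<And>j. j < m \<Longrightarrow> continuous_on {x. H j x < \<infinity>} (H j)"
    and dom_ne: "domF m H \<noteq> {}"
    and dom_closed: "closed (domF m H)"
    and A1: "assumption_A1 m G H"
    and seq: "mpg_sequence m G DG H \<alpha> \<gamma> \<tau>1 \<tau>2 xs"
  shows "\<exists>xb. xs \<longlonglongrightarrow> xb \<and> weakly_pareto m G H xb"
proof -
  have x0: "xs 0 \<in> domF m H"
    and par: "0 < \<alpha>" "0 < \<gamma>" "\<gamma> < 2 / \<alpha>" "0 < \<tau>1" "\<tau>2 < 1"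
    and steps: "\<And>k. mpg_step m G DG H \<alpha> \<gamma> \<tau>1 \<tau>2 (xs k) (xs (Suc k))"
    using seq unfolding mpg_sequence_def by auto
  interpret mpg_problem m G DG H \<alpha> \<gamma> \<tau>1 \<tau>2
    using m_pos G_grad G_C1 G_convex H_proper H_convex H_cont dom_closed par
    by unfold_locales auto
  obtain p t where "mpg_trajectory m G DG H \<alpha> \<gamma> \<tau>1 \<tau>2 xs p t"
    using mpg_sequence_trajectory[OF A1 x0 steps] by blast
  thus ?thesis
    by (rule mpg_trajectory.converges_to_weakly_pareto)
qed

end
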